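(* Let $n\ge1$, $\lambda,R>0$ and $\alpha>1$. Let $\phi:[0,R]\to\mathbb{R}$ be a nonnegative solution of $$r^{1-n}(r^{n-1}\phi')'=\lambda\phi^\alpha\ \text{ in }(0,R),\qquad \phi(0)=1,\qquad\phi'(0)=0.$$ Then $\phi'>0$ in $(0,R)$ and, for every $k=1,2,\dots$, there exists $c_{n,k}>0$ depending only on $n$ and $k$ such that $\phi(r)\ge c_{n,k}\lambda^kr^{2k}$ for every $r\in(0,R)$. *)

theory Defs
  imports "HOL-Analysis.Analysis"
begin

text \<open>Classical solution phi in C^1[0,R] (derivative dphi, one-sided at the endpoints),
  with r^(n-1) phi' differentiable in (0,R) and
  (r^(n-1) phi')' = lam r^(n-1) phi^alpha there, i.e. r^(1-n)(r^(n-1) phi')' = lam phi^alpha;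
  phi nonnegative on [0,R], phi(0) = 1, phi'(0) = 0.\<close>
definition radial_solution ::
  "nat \<Rightarrow> real \<Rightarrow> real \<Rightarrow> real \<Rightarrow> (real \<Rightarrow> real) \<Rightarrow> (real \<Rightarrow> real) \<Rightarrow> bool" where
  "radial_solution n lam alpha R phi dphi \<longleftrightarrow>
     (\<forall>r\<in>{0..R}. (phi has_real_derivative dphi r) (at r within {0..R})) \<and>
     continuous_on {0..R} dphi \<and>
     (\<forall>r\<in>{0<..<R}. ((\<lambda>s. s ^ (n - 1) * dphi s) has_real_derivative
                        (lam * r ^ (n - 1) * phi r powr alpha)) (at r)) \<and>
     (\<forall>r\<in>{0..R}. phi r \<ge> 0) \<and>
     phi 0 = 1 \<and> dphi 0 = 0"

end

theory Submission
  imports Defs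
begin

text \<open>The flux \<open>r\<^sup>n\<^sup>-\<^sup>1 \<phi>'\<close> vanishes at \<open>0\<close> and has nonnegative derivative, so \<open>\<phi>' \<ge> 0\<close>,
  \<open>\<phi> \<ge> 1\<close> and hence \<open>\<phi>\<^sup>\<alpha> \<ge> \<phi>\<close>. Integrating the equation twice turns a lower bound
  \<open>\<phi>\<^sup>\<alpha> \<ge> c r\<^sup>j\<close> into \<open>\<phi>' \<ge> \<lambda> c r\<^sup>j\<^sup>+\<^sup>1 / (n + j)\<close> and \<open>\<phi> \<ge> \<lambda> c r\<^sup>j\<^sup>+\<^sup>2 / ((n + j)(j + 2))\<close>;
  iterating from \<open>\<phi> \<ge> 1\<close> gives the bounds \<open>c\<^sub>n\<^sub>,\<^sub>k \<lambda>\<^sup>k r\<^sup>2\<^sup>k\<close>.\<close>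

lemma DERIV_le_imp_diff_le:
  fixes f g f' g' :: "real \<Rightarrow> real"
  assumes "a \<le> b" "continuous_on {a..b} f" "continuous_on {a..b} g"
    and "\<And>x. a < x \<Longrightarrow> x < b \<Longrightarrow> (f has_real_derivative f' x) (at x)"
    and "\<And>x. a < x \<Longrightarrow> x < b \<Longrightarrow> (g has_real_derivative g' x) (at x)"
    and "\<And>x. a < x \<Longrightarrow> x < b \<Longrightarrow> f' x \<le> g' x"
  shows "f b - f a \<le> g b - g a"
proof -
  have "(\<lambda>x. g x - f x) a \<le> (\<lambda>x. g x - f x) b"
  proof (rule DERIV_nonneg_imp_increasing_open[where f = "\<lambda>x. g x - f x"])
    fix x assume "a < x" "x < b"
    then show "\<exists>y. ((\<lambda>x. g x - f x) has_real_derivative y) (at x) \<and> 0 \<le> y"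
      using assms by (intro exI[of _ "g' x - f' x"]) (auto intro: DERIV_diff)
  qed (use assms in \<open>auto intro: continuous_on_diff\<close>)
  then show ?thesis by simp
qed

definition radial_coeff :: "nat \<Rightarrow> nat \<Rightarrow> real" where
  "radial_coeff n k = (\<Prod>j<k. 1 / real ((n + 2 * j) * (2 * j + 2)))"

lemma radial_coeff_pos: "n \<ge> 1 \<Longrightarrow> 0 < radial_coeff n k"
  unfolding radial_coeff_def by (intro prod_pos) (auto simp del: of_nat_mult)

lemma radial_coeff_Suc:
  "radial_coeff n (Suc k) = radial_coeff n k / real ((n + 2 * k) * (2 * k + 2))"
  by (simp add: radial_coeff_def)

locale positive_radial_solution =
  fixes n :: nat and lam alpha R :: real and phi dphi :: "real \<Rightarrow> real"
  assumes n_ge_1: "n \<ge> 1" and lam_pos: "lam > 0" and alpha_ge_1: "alpha \<ge> 1"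
    and solution: "radial_solution n lam alpha R phi dphi"
begin

lemma phi_has_derivative_within: "r \<in> {0..R} \<Longrightarrow> (phi has_real_derivative dphi r) (at r within {0..R})"
  and continuous_on_dphi: "continuous_on {0..R} dphi"
  and flux_has_derivative: "r \<in> {0<..<R} \<Longrightarrow>
    ((\<lambda>s. s ^ (n - 1) * dphi s) has_real_derivative lam * r ^ (n - 1) * phi r powr alpha) (at r)"
  and phi_0: "phi 0 = 1" and dphi_0: "dphi 0 = 0"
  using solution unfolding radial_solution_def by auto

lemma phi_has_derivative: "0 < r \<Longrightarrow> r < R \<Longrightarrow> (phi has_real_derivative dphi r) (at r)"
  using phi_has_derivative_within[of r] at_within_Icc_at[of 0 r R] by simp

lemma continuous_on_phi: "continuous_on {0..R} phi"
  using phi_has_derivative_within DERIV_continuous continuous_on_eq_continuous_within by blast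

lemma continuous_on_flux: "continuous_on {0..R} (\<lambda>s. s ^ (n - 1) * dphi s)"
  by (intro continuous_intros continuous_on_dphi)

lemma flux_ge:
  assumes bound: "\<And>s. 0 < s \<Longrightarrow> s < r \<Longrightarrow> c * s ^ j \<le> phi s powr alpha"
    and r: "0 \<le> r" "r \<le> R"
  shows "lam * c * r ^ (n + j) / (n + j) \<le> r ^ (n - 1) * dphi r"
proof -
  define K where "K = lam * c / (n + j)"
  have exponent: "n + j - Suc 0 = (n - 1) + j" using n_ge_1 by simp
  have "K * r ^ (n + j) - K * 0 ^ (n + j) \<le> r ^ (n - 1) * dphi r - 0 ^ (n - 1) * dphi 0"
  proof (rule DERIV_le_imp_diff_le[where f' = "\<lambda>s. K * (real (n + j) * s ^ (n - 1 + j))"])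
    show "continuous_on {0..r} (\<lambda>s. K * s ^ (n + j))"
      by (intro continuous_intros)
    show "continuous_on {0..r} (\<lambda>s. s ^ (n - 1) * dphi s)"
      using continuous_on_subset[OF continuous_on_flux] r by auto
    fix s assume s: "0 < s" "s < r"
    show "((\<lambda>s. K * s ^ (n + j)) has_real_derivative K * (real (n + j) * s ^ (n - 1 + j))) (at s)"
      using DERIV_cmult[OF DERIV_pow[of "n + j" s]] unfolding exponent .
    show "((\<lambda>s. s ^ (n - 1) * dphi s) has_real_derivative lam * s ^ (n - 1) * phi s powr alpha) (at s)"
      using flux_has_derivative s r by simp
    have "K * (real (n + j) * s ^ (n - 1 + j)) = lam * s ^ (n - 1) * (c * s ^ j)"
      using n_ge_1 unfolding K_def power_add by (simp del: of_nat_add)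
    also have "\<dots> \<le> lam * s ^ (n - 1) * phi s powr alpha"
      using bound[OF s] lam_pos s by (simp add: mult_left_mono)
    finally show "K * (real (n + j) * s ^ (n - 1 + j)) \<le> lam * s ^ (n - 1) * phi s powr alpha" .
  qed (use r in simp)
  then show ?thesis using n_ge_1 dphi_0 by (simp add: K_def power_0_left)
qed

lemma dphi_ge:
  assumes bound: "\<And>s. 0 < s \<Longrightarrow> s < r \<Longrightarrow> c * s ^ j \<le> phi s powr alpha"
    and r: "0 < r" "r \<le> R"
  shows "lam * c * r ^ (j + 1) / (n + j) \<le> dphi r"
proof -
  have "(n - 1) + (j + 1) = n + j" using n_ge_1 by simp
  then have "r ^ (n - 1) * r ^ (j + 1) = r ^ (n + j)" by (metis power_add)
  then have "r ^ (n - 1) * (lam * c * r ^ (j + 1) / (n + j)) = lam * c * r ^ (n + j) / (n + j)"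
    by (simp add: mult_ac)
  also have "\<dots> \<le> r ^ (n - 1) * dphi r"
    using flux_ge[OF bound] r by simp
  finally show ?thesis
    by (rule mult_left_le_imp_le) (use r in simp)
qed

lemma phi_ge:
  assumes bound: "\<And>s. 0 < s \<Longrightarrow> s < r \<Longrightarrow> c * s ^ j \<le> phi s powr alpha"
    and r: "0 \<le> r" "r \<le> R"
  shows "1 + lam * c * r ^ (j + 2) / ((n + j) * (j + 2)) \<le> phi r"
proof -
  define K where "K = lam * c / ((n + j) * (j + 2))"
  have "K * r ^ (j + 2) - K * 0 ^ (j + 2) \<le> phi r - phi 0"
  proof (rule DERIV_le_imp_diff_le[where f' = "\<lambda>s. K * (real (j + 2) * s ^ (j + 2 - Suc 0))"])
    show "continuous_on {0..r} (\<lambda>s. K * s ^ (j + 2))"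
      by (intro continuous_intros)
    show "continuous_on {0..r} phi"
      using continuous_on_subset[OF continuous_on_phi] r by auto
    fix s assume s: "0 < s" "s < r"
    show "((\<lambda>s. K * s ^ (j + 2)) has_real_derivative K * (real (j + 2) * s ^ (j + 2 - Suc 0))) (at s)"
      by (intro DERIV_cmult DERIV_pow)
    show "(phi has_real_derivative dphi s) (at s)"
      using phi_has_derivative s r by simp
    have "K * (real (j + 2) * s ^ (j + 2 - Suc 0)) = lam * c * s ^ (j + 1) / (n + j)"
      unfolding K_def of_nat_mult by (simp del: of_nat_add)
    also have "\<dots> \<le> dphi s"
      using dphi_ge[of s] bound s r by simp
    finally show "K * (real (j + 2) * s ^ (j + 2 - Suc 0)) \<le> dphi s" .
  qed (use r in simp)
  then show ?thesis using phi_0 by (simp add: K_def)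
qed

lemma phi_ge_1: "0 \<le> r \<Longrightarrow> r \<le> R \<Longrightarrow> 1 \<le> phi r"
  using phi_ge[where c = 0 and j = 0] by simp

lemma phi_le_phi_powr: "0 \<le> r \<Longrightarrow> r \<le> R \<Longrightarrow> phi r \<le> phi r powr alpha"
  using powr_mono[of 1 alpha "phi r"] alpha_ge_1 phi_ge_1 by simp

lemma dphi_pos:
  assumes "0 < r" "r \<le> R"
  shows "0 < dphi r"
proof -
  have "1 * s ^ 0 \<le> phi s powr alpha" if "0 < s" "s < r" for s
    using order_trans[OF phi_ge_1 phi_le_phi_powr] that assms by simp
  then have "lam * r / n \<le> dphi r"
    using dphi_ge[where c = 1 and j = 0] assms by simp
  moreover have "0 < lam * r / n"
    using lam_pos assms n_ge_1 by simp
  ultimately show ?thesis by linarith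
qed

lemma phi_ge_radial_coeff:
  "0 \<le> r \<Longrightarrow> r \<le> R \<Longrightarrow> radial_coeff n k * lam ^ k * r ^ (2 * k) \<le> phi r"
proof (induction k arbitrary: r)
  case 0
  then show ?case using phi_ge_1 by (simp add: radial_coeff_def)
next
  case (Suc k)
  have "radial_coeff n k * lam ^ k * s ^ (2 * k) \<le> phi s powr alpha" if "0 < s" "s < r" for s
    using Suc.IH[of s] phi_le_phi_powr[of s] that Suc.prems by simp
  then have "1 + lam * (radial_coeff n k * lam ^ k) * r ^ (2 * k + 2) / ((n + 2 * k) * (2 * k + 2))
      \<le> phi r"
    by (rule phi_ge) (use Suc.prems in auto)
  moreover have "radial_coeff n (Suc k) * lam ^ Suc k * r ^ (2 * Suc k)
      = lam * (radial_coeff n k * lam ^ k) * r ^ (2 * k + 2) / ((n + 2 * k) * (2 * k + 2))"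
    by (simp add: radial_coeff_Suc mult_ac)
  ultimately show ?case by simp
qed

end

theorem lemma4p6:
  fixes n :: nat
  assumes "n \<ge> 1"
  shows "(\<forall>lam R alpha phi dphi.
            lam > 0 \<and> R > 0 \<and> alpha > 1 \<and> radial_solution n lam alpha R phi dphi
            \<longrightarrow> (\<forall>r\<in>{0<..<R}. dphi r > 0))
       \<and> (\<forall>k::nat. k \<ge> 1 \<longrightarrow> (\<exists>c>0. \<forall>lam R alpha phi dphi.
            lam > 0 \<and> R > 0 \<and> alpha > 1 \<and> radial_solution n lam alpha R phi dphi
            \<longrightarrow> (\<forall>r\<in>{0<..<R}. phi r \<ge> c * lam ^ k * r ^ (2 * k))))"
proof (intro conjI allI impI)
  fix lam R alpha phi dphi
  assume "lam > 0 \<and> R > 0 \<and> alpha > 1 \<and> radial_solution n lam alpha R phi dphi"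
  then interpret positive_radial_solution n lam alpha R phi dphi
    using assms by unfold_locales auto
  show "\<forall>r\<in>{0<..<R}. dphi r > 0" using dphi_pos by auto
next
  fix k :: nat
  show "\<exists>c>0. \<forall>lam R alpha phi dphi.
            lam > 0 \<and> R > 0 \<and> alpha > 1 \<and> radial_solution n lam alpha R phi dphi
            \<longrightarrow> (\<forall>r\<in>{0<..<R}. phi r \<ge> c * lam ^ k * r ^ (2 * k))"
  proof (intro exI[of _ "radial_coeff n k"] conjI allI impI ballI)
    show "radial_coeff n k > 0" using radial_coeff_pos assms by simp
    fix lam R alpha phi dphi r
    assume "lam > 0 \<and> R > 0 \<and> alpha > 1 \<and> radial_solution n lam alpha R phi dphi"
    then interpret positive_radial_solution n lam alpha R phi dphi
      using assms by unfold_locales auto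
    assume "r \<in> {0<..<R}"
    then show "phi r \<ge> radial_coeff n k * lam ^ k * r ^ (2 * k)"
      using phi_ge_radial_coeff by simp
  qed
qed

end
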